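(* Let $\gamma:[0,1]\to\mathbb T^2$ be an arc-length parametrized unit length curve with curvature bounded below by a positive constant. For a positive integer $m$ let $\lambda=2\pi\sqrt m$, $\mathcal E_\lambda=\{\mu\in\mathbb Z^2:\|\mu\|^2=m\}$, $N=|\mathcal E_\lambda|$, and let $\Phi(x)=\sum_{\mu\in\mathcal E_\lambda}a_\mu e^{2\pi i\langle\mu,x\rangle}$ with $\sum_\mu|a_\mu|^2=1$. Suppose $\lambda$ satisfies $\min_{\mu_1\ne\mu_2\in\mathcal E_\lambda}\|\mu_1-\mu_2\|\gg\lambda/\log^{3/2+\varepsilon}\lambda$ for some $\varepsilon>0$, and let $I\subset[0,1]$ be an interval with $|I|>\lambda^{-1/2}(\log\lambda)^{3/4+\varepsilon}N$. Then $$\frac1{|I|}\int_I|\Phi(\gamma(t))|^2\,dt\ge\frac12.$$ *)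

theory Defs
  imports "HOL-Analysis.Analysis"
begin

text \<open>Points of R^2 (lifts of points of the torus T^2 = R^2/Z^2) are pairs of reals;
  lattice points are pairs of integers.\<close>

definition lat_inner :: "int \<times> int \<Rightarrow> real \<times> real \<Rightarrow> real" where
  "lat_inner mu x = real_of_int (fst mu) * fst x + real_of_int (snd mu) * snd x"

definition lat_normsq :: "int \<times> int \<Rightarrow> int" where
  "lat_normsq mu = (fst mu)^2 + (snd mu)^2"

definition lat_dist :: "int \<times> int \<Rightarrow> int \<times> int \<Rightarrow> real" where
  "lat_dist mu nu = sqrt (real_of_int ((fst mu - fst nu)^2 + (snd mu - snd nu)^2))"

definition Elam :: "nat \<Rightarrow> (int \<times> int) set" where
  "Elam m = {mu. lat_normsq mu = int m}"

definition lam :: "nat \<Rightarrow> real" where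
  "lam m = 2 * pi * sqrt (real m)"

definition Phi :: "nat \<Rightarrow> (int \<times> int \<Rightarrow> complex) \<Rightarrow> real \<times> real \<Rightarrow> complex" where
  "Phi m a x = (\<Sum>mu\<in>Elam m. a mu * exp (2 * of_real pi * \<i> * of_real (lat_inner mu x)))"

text \<open>A smooth curve on [0,1]: D 0 = gamma and each D k has derivative D (Suc k) on [0,1];
  unit speed (arc-length parametrization) and curvature |gamma''| bounded below by kappa > 0.\<close>
definition smooth_unit_speed_curved ::
    "(real \<Rightarrow> real \<times> real) \<Rightarrow> real \<Rightarrow> bool" where
  "smooth_unit_speed_curved g kappa \<longleftrightarrow>
     kappa > 0 \<and>
     (\<exists>D :: nat \<Rightarrow> real \<Rightarrow> real \<times> real.
        D 0 = g \<and>
        (\<forall>k. \<forall>t\<in>{0..1}. (D k has_vector_derivative D (Suc k) t) (at t within {0..1})) \<and>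
        (\<forall>t\<in>{0..1}. norm (D 1 t) = 1) \<and>
        (\<forall>t\<in>{0..1}. norm (D 2 t) \<ge> kappa))"

end

theory Submission
  imports Defs
begin

text \<open>Expanding |Phi(gamma t)|^2 gives the diagonal sum |a_mu|^2 = 1 plus off-diagonal oscillatory
  integrals of exp(i <xi, gamma t>) over I, with xi = 2 pi (mu - nu). Because gamma' is a unit vector
  orthogonal to gamma'' and |gamma''| >= kappa, on a short arc either the first or the second
  derivative of the phase <xi, gamma> has size comparable to |xi|, so the van der Corput lemmas bound
  each such integral by C |xi|^(-1/2). With the separation hypothesis and Cauchy-Schwarz for the
  coefficients, the off-diagonal part is at most N C (lambda / log^(3/2+eps) lambda)^(-1/2), which is
  less than |I|/2 once lambda is large.\<close>

section \<open>Van der Corput estimates\<close>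

lemma has_vector_derivative_exp_i_phase:
  fixes \<phi> :: "real \<Rightarrow> real"
  assumes "(\<phi> has_real_derivative f) (at x within S)"
  shows "((\<lambda>x. exp (\<i> * of_real (\<phi> x))) has_vector_derivative
           \<i> * of_real f * exp (\<i> * of_real (\<phi> x))) (at x within S)"
proof -
  have "((\<lambda>x. \<i> * of_real (\<phi> x)) has_vector_derivative \<i> * of_real f) (at x within S)"
    using has_vector_derivative_mult[OF has_vector_derivative_const has_vector_derivative_of_real[OF assms]]
    by simp
  from field_vector_diff_chain_within[OF this DERIV_exp[THEN has_field_derivative_at_within]]
  show ?thesis by (simp add: o_def)
qed

lemma oscillatory_integral_ibp_bound:
  fixes \<phi> f f' :: "real \<Rightarrow> real"
  assumes ab: "a \<le> b"
    and d\<phi>: "\<And>x. x \<in> {a..b} \<Longrightarrow> (\<phi> has_real_derivative f x) (at x within {a..b})"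
    and df: "\<And>x. x \<in> {a..b} \<Longrightarrow> (f has_real_derivative f' x) (at x within {a..b})"
    and cf': "continuous_on {a..b} f'"
    and nz: "\<And>x. x \<in> {a..b} \<Longrightarrow> f x \<noteq> 0"
  shows "norm (integral {a..b} (\<lambda>x. exp (\<i> * of_real (\<phi> x))))
           \<le> 1 / \<bar>f a\<bar> + 1 / \<bar>f b\<bar> + integral {a..b} (\<lambda>x. \<bar>f' x\<bar> / (f x)^2)"
proof -
  define F where "F x = - \<i> * exp (\<i> * of_real (\<phi> x)) * of_real (1 / f x)" for x
  define G where "G x = \<i> * exp (\<i> * of_real (\<phi> x)) * of_real (f' x / (f x)^2)" for x
  have cf: "continuous_on {a..b} f" using df DERIV_continuous_on by blast
  have cG: "continuous_on {a..b} G" unfolding G_def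
    by (intro continuous_intros cf' cf DERIV_continuous_on[OF d\<phi>]) (use nz in auto)
  \<comment> \<open>Integration by parts: \<open>F = E / (\<i> f)\<close> with \<open>E = exp (\<i> \<phi>)\<close> has derivative \<open>E + G\<close>.\<close>
  have dF: "(F has_vector_derivative exp (\<i> * of_real (\<phi> x)) + G x) (at x within {a..b})"
    if x: "x \<in> {a..b}" for x
  proof -
    have "((\<lambda>x. 1 / f x) has_real_derivative - f' x / (f x)^2) (at x within {a..b})"
      using DERIV_inverse_fun[OF df[OF x] nz[OF x]] nz[OF x]
      by (simp add: divide_inverse power2_eq_square)
    from has_vector_derivative_mult[OF has_vector_derivative_mult[OF has_vector_derivative_const
           has_vector_derivative_exp_i_phase[OF d\<phi>[OF x]]] has_vector_derivative_of_real[OF this]]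
    show ?thesis
      unfolding F_def
      by (rule has_vector_derivative_eq_rhs) (use nz[OF x] in \<open>simp add: G_def field_simps\<close>)
  qed
  have iG: "(G has_integral integral {a..b} G) {a..b}"
    using cG integrable_continuous_real by blast
  have "((\<lambda>x. exp (\<i> * of_real (\<phi> x))) has_integral (F b - F a - integral {a..b} G)) {a..b}"
    using has_integral_diff[OF fundamental_theorem_of_calculus[OF ab dF] iG] by simp
  then have "norm (integral {a..b} (\<lambda>x. exp (\<i> * of_real (\<phi> x))))
               = norm (F b - F a - integral {a..b} G)"
    by (simp add: integral_unique)
  also have "\<dots> \<le> norm (F b) + norm (F a) + norm (integral {a..b} G)"
    using norm_triangle_ineq4[of "F b - F a" "integral {a..b} G"] norm_triangle_ineq4[of "F b" "F a"]
    by linarith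
  also have "norm (integral {a..b} G) \<le> integral {a..b} (\<lambda>x. \<bar>f' x\<bar> / (f x)^2)"
  proof (rule integral_norm_bound_integral)
    show "G integrable_on {a..b}" using iG by blast
    show "(\<lambda>x. \<bar>f' x\<bar> / (f x)^2) integrable_on {a..b}"
      by (intro integrable_continuous_real continuous_intros cf' cf) (use nz in auto)
  qed (simp add: G_def norm_mult norm_divide abs_mult norm_power)
  finally show ?thesis
    by (simp add: F_def norm_mult norm_divide add_ac)
qed

lemma oscillatory_integral_monotone_derivative_bound:
  fixes \<phi> f f' :: "real \<Rightarrow> real"
  assumes ab: "a \<le> b"
    and d\<phi>: "\<And>x. x \<in> {a..b} \<Longrightarrow> (\<phi> has_real_derivative f x) (at x within {a..b})"
    and df: "\<And>x. x \<in> {a..b} \<Longrightarrow> (f has_real_derivative f' x) (at x within {a..b})"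
    and cf': "continuous_on {a..b} f'"
    and \<delta>: "\<delta> > 0" "\<And>x. x \<in> {a..b} \<Longrightarrow> \<delta> \<le> \<bar>f x\<bar>"
    and f'_nonneg: "\<And>x. x \<in> {a..b} \<Longrightarrow> 0 \<le> f' x"
  shows "norm (integral {a..b} (\<lambda>x. exp (\<i> * of_real (\<phi> x)))) \<le> 4 / \<delta>"
proof -
  have nz: "\<And>x. x \<in> {a..b} \<Longrightarrow> f x \<noteq> 0" using \<delta> by force
  have "((\<lambda>x. f' x / (f x)^2) has_integral (- (1 / f b) - - (1 / f a))) {a..b}"
  proof (rule fundamental_theorem_of_calculus[OF ab])
    show "((\<lambda>x. - (1 / f x)) has_vector_derivative f' x / (f x)^2) (at x within {a..b})"
      if x: "x \<in> {a..b}" for x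
      using DERIV_inverse_fun[OF df[OF x] nz[OF x], THEN DERIV_minus] nz[OF x]
      by (simp add: divide_inverse power2_eq_square has_real_derivative_iff_has_vector_derivative)
  qed
  then have "integral {a..b} (\<lambda>x. \<bar>f' x\<bar> / (f x)^2) = 1 / f a - 1 / f b"
    using f'_nonneg by (subst integral_cong[where g="\<lambda>x. f' x / (f x)^2"]) (auto simp: integral_unique)
  also have "\<dots> \<le> 1 / \<bar>f a\<bar> + 1 / \<bar>f b\<bar>"
    using abs_ge_self[of "1 / f a"] abs_ge_minus_self[of "1 / f b"] by simp
  finally have "norm (integral {a..b} (\<lambda>x. exp (\<i> * of_real (\<phi> x))))
      \<le> 2 * (1 / \<bar>f a\<bar> + 1 / \<bar>f b\<bar>)"
    using oscillatory_integral_ibp_bound[OF ab d\<phi> df cf' nz] by simp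
  moreover have "1 / \<bar>f a\<bar> + 1 / \<bar>f b\<bar> \<le> 2 / \<delta>"
    using frac_le[of 1 1 \<delta> "\<bar>f a\<bar>"] frac_le[of 1 1 \<delta> "\<bar>f b\<bar>"] \<delta> ab by simp
  ultimately show ?thesis by simp
qed

lemma oscillatory_integral_bounded_derivatives_bound:
  fixes \<phi> f f' :: "real \<Rightarrow> real"
  assumes ab: "a \<le> b"
    and d\<phi>: "\<And>x. x \<in> {a..b} \<Longrightarrow> (\<phi> has_real_derivative f x) (at x within {a..b})"
    and df: "\<And>x. x \<in> {a..b} \<Longrightarrow> (f has_real_derivative f' x) (at x within {a..b})"
    and cf': "continuous_on {a..b} f'"
    and \<delta>: "\<delta> > 0" "\<And>x. x \<in> {a..b} \<Longrightarrow> \<delta> \<le> \<bar>f x\<bar>"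
    and K: "\<And>x. x \<in> {a..b} \<Longrightarrow> \<bar>f' x\<bar> \<le> K"
  shows "norm (integral {a..b} (\<lambda>x. exp (\<i> * of_real (\<phi> x)))) \<le> 2 / \<delta> + (b - a) * K / \<delta>^2"
proof -
  have nz: "\<And>x. x \<in> {a..b} \<Longrightarrow> f x \<noteq> 0" using \<delta> by force
  have cf: "continuous_on {a..b} f" using df DERIV_continuous_on by blast
  have "integral {a..b} (\<lambda>x. \<bar>f' x\<bar> / (f x)^2) \<le> integral {a..b} (\<lambda>x. K / \<delta>^2)"
  proof (rule integral_le)
    show "(\<lambda>x. \<bar>f' x\<bar> / (f x)^2) integrable_on {a..b}"
      by (intro integrable_continuous_real continuous_intros cf' cf) (use nz in auto)
    show "\<bar>f' x\<bar> / (f x)^2 \<le> K / \<delta>^2" if "x \<in> {a..b}" for x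
      using \<delta> K[OF that] that
      by (intro frac_le) (auto simp: power_mono abs_le_square_iff[symmetric] intro: order_trans[OF abs_ge_zero])
  qed (intro integrable_continuous_real continuous_intros)
  moreover have "1 / \<bar>f a\<bar> + 1 / \<bar>f b\<bar> \<le> 2 / \<delta>"
    using frac_le[of 1 1 \<delta> "\<bar>f a\<bar>"] frac_le[of 1 1 \<delta> "\<bar>f b\<bar>"] \<delta> ab by simp
  moreover have "norm (integral {a..b} (\<lambda>x. exp (\<i> * of_real (\<phi> x))))
      \<le> 1 / \<bar>f a\<bar> + 1 / \<bar>f b\<bar> + integral {a..b} (\<lambda>x. \<bar>f' x\<bar> / (f x)^2)"
    by (rule oscillatory_integral_ibp_bound[OF ab d\<phi> df cf' nz])
  ultimately show ?thesis
    using ab by simp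
qed

lemma continuous_mono_level_split:
  fixes f :: "real \<Rightarrow> real"
  assumes ab: "a \<le> b" and cf: "continuous_on {a..b} f"
    and mono: "\<And>x y. x \<in> {a..b} \<Longrightarrow> y \<in> {a..b} \<Longrightarrow> x \<le> y \<Longrightarrow> f x \<le> f y"
  obtains p where "p \<in> {a..b}" "p = a \<or> (\<forall>x\<in>{a..p}. f x \<le> y)" "p = b \<or> (\<forall>x\<in>{p..b}. y \<le> f x)"
proof (cases "y \<le> f a")
  case True
  with that[of a] ab mono[of a] show ?thesis by fastforce
next
  case below_a: False
  show ?thesis
  proof (cases "f b \<le> y")
    case True
    with that[of b] ab mono[of _ b] show ?thesis by fastforce
  next
    case False
    with IVT'[of f a y b] below_a ab cf obtain p where "a \<le> p" "p \<le> b" "f p = y"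
      by auto
    with that[of p] mono[of _ p] mono[of p] show ?thesis by auto
  qed
qed

lemma increment_ge_of_derivative_ge:
  fixes f f' :: "real \<Rightarrow> real"
  assumes "x \<le> y"
    and "\<And>z. z \<in> {x..y} \<Longrightarrow> (f has_real_derivative f' z) (at z within {x..y})"
    and "\<And>z. z \<in> {x..y} \<Longrightarrow> r \<le> f' z"
  shows "r * (y - x) \<le> f y - f x"
proof -
  have "(f' has_integral (f y - f x)) {x..y}"
    using assms by (intro fundamental_theorem_of_calculus)
      (auto simp: has_real_derivative_iff_has_vector_derivative[symmetric])
  moreover have "((\<lambda>_. r) has_integral (r * (y - x))) {x..y}"
    using has_integral_const_real[of r x y] assms(1) by (simp add: mult.commute)
  ultimately show ?thesis
    using assms(3) by (metis has_integral_le)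
qed

lemma derivative_ge_small_values_interval:
  fixes f f' :: "real \<Rightarrow> real"
  assumes ab: "a \<le> b" and r: "r > 0" and \<delta>: "\<delta> > 0"
    and df: "\<And>x. x \<in> {a..b} \<Longrightarrow> (f has_real_derivative f' x) (at x within {a..b})"
    and f'_ge: "\<And>x. x \<in> {a..b} \<Longrightarrow> r \<le> f' x"
  obtains p q where "a \<le> p" "p \<le> q" "q \<le> b" "q - p \<le> 2 * \<delta> / r"
    "p = a \<or> (\<forall>x\<in>{a..p}. \<delta> \<le> \<bar>f x\<bar>)" "q = b \<or> (\<forall>x\<in>{q..b}. \<delta> \<le> \<bar>f x\<bar>)"
proof -
  have cf: "continuous_on {a..b} f" using df DERIV_continuous_on by blast
  have grow: "r * (y - x) \<le> f y - f x" if "x \<in> {a..b}" "y \<in> {a..b}" "x \<le> y" for x y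
    using that by (intro increment_ge_of_derivative_ge) (auto intro: DERIV_subset[OF df] f'_ge)
  have mono: "f x \<le> f y" if "x \<in> {a..b}" "y \<in> {a..b}" "x \<le> y" for x y
  proof -
    have "0 \<le> r * (y - x)" using r that(3) by simp
    with grow[OF that] show ?thesis by linarith
  qed
  obtain p where p: "p \<in> {a..b}" "p = a \<or> (\<forall>x\<in>{a..p}. f x \<le> -\<delta>)" "p = b \<or> (\<forall>x\<in>{p..b}. -\<delta> \<le> f x)"
    using continuous_mono_level_split[OF ab cf mono] .
  obtain q where q: "q \<in> {a..b}" "q = a \<or> (\<forall>x\<in>{a..q}. f x \<le> \<delta>)" "q = b \<or> (\<forall>x\<in>{q..b}. \<delta> \<le> f x)"
    using continuous_mono_level_split[OF ab cf mono] .
  have pq: "p \<le> q"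
  proof (rule ccontr)
    assume "\<not> p \<le> q"
    with p(1) q(1) have "p \<noteq> a" "q \<noteq> b" "q \<le> p" by auto
    with p(1,2) q(3) have "f p \<le> -\<delta>" "\<delta> \<le> f p" by auto
    with \<delta> show False by simp
  qed
  have len: "q - p \<le> 2 * \<delta> / r"
  proof (cases "p = q")
    case False
    with pq p q have "-\<delta> \<le> f p" "f q \<le> \<delta>" by auto
    with grow[of p q] p q pq r show ?thesis by (simp add: field_simps)
  qed (use \<delta> r in simp)
  from p(2) have left: "p = a \<or> (\<forall>x\<in>{a..p}. \<delta> \<le> \<bar>f x\<bar>)" by force
  from q(3) have right: "q = b \<or> (\<forall>x\<in>{q..b}. \<delta> \<le> \<bar>f x\<bar>)" by force
  from p(1) q(1) pq len left right show ?thesis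
    by (intro that) auto
qed

lemma norm_integral_split3_le:
  fixes E :: "real \<Rightarrow> 'a::banach"
  assumes "E integrable_on {a..b}" "a \<le> p" "p \<le> q" "q \<le> b"
  shows "norm (integral {a..b} E)
           \<le> norm (integral {a..p} E) + norm (integral {p..q} E) + norm (integral {q..b} E)"
proof -
  have "integral {a..p} E + integral {p..b} E = integral {a..b} E"
    using assms by (intro Henstock_Kurzweil_Integration.integral_combine) auto
  moreover have "integral {p..q} E + integral {q..b} E = integral {p..b} E"
    using assms by (intro Henstock_Kurzweil_Integration.integral_combine
        integrable_on_subinterval[OF assms(1)]) auto
  ultimately have "norm (integral {a..b} E) = norm (integral {a..p} E + integral {p..q} E + integral {q..b} E)"
    by (simp add: add.assoc)
  then show ?thesis
    using norm_triangle_ineq[of "integral {a..p} E + integral {p..q} E" "integral {q..b} E"]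
      norm_triangle_ineq[of "integral {a..p} E" "integral {p..q} E"] by linarith
qed

lemma oscillatory_integral_second_derivative_bound:
  fixes \<phi> f f' :: "real \<Rightarrow> real"
  assumes ab: "a \<le> b" and r: "r > 0"
    and d\<phi>: "\<And>x. x \<in> {a..b} \<Longrightarrow> (\<phi> has_real_derivative f x) (at x within {a..b})"
    and df: "\<And>x. x \<in> {a..b} \<Longrightarrow> (f has_real_derivative f' x) (at x within {a..b})"
    and cf': "continuous_on {a..b} f'"
    and f'_ge: "\<And>x. x \<in> {a..b} \<Longrightarrow> r \<le> f' x"
  shows "norm (integral {a..b} (\<lambda>x. exp (\<i> * of_real (\<phi> x)))) \<le> 10 / sqrt r"
proof -
  define E where "E = (\<lambda>x. exp (\<i> * of_real (\<phi> x)))"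
  define \<delta> where "\<delta> = sqrt r"
  have \<delta>0: "\<delta> > 0" and \<delta>\<delta>: "\<delta> * \<delta> = r"
    using r by (simp_all add: \<delta>_def)
  have \<delta>: "\<delta> > 0" "2 * \<delta> / r = 2 / \<delta>"
    using \<delta>0 unfolding \<delta>\<delta>[symmetric] by simp_all
  \<comment> \<open>Outside \<open>[p, q]\<close> the first derivative test applies; \<open>[p, q]\<close> is estimated by its length.\<close>
  obtain p q where pq: "a \<le> p" "p \<le> q" "q \<le> b" "q - p \<le> 2 * \<delta> / r"
    and left: "p = a \<or> (\<forall>x\<in>{a..p}. \<delta> \<le> \<bar>f x\<bar>)" and right: "q = b \<or> (\<forall>x\<in>{q..b}. \<delta> \<le> \<bar>f x\<bar>)"
    using derivative_ge_small_values_interval[OF ab r \<open>\<delta> > 0\<close> df f'_ge] .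
  have outer: "norm (integral {u..v} E) \<le> 4 / \<delta>"
    if "a \<le> u" "u \<le> v" "v \<le> b" "u = v \<or> (\<forall>x\<in>{u..v}. \<delta> \<le> \<bar>f x\<bar>)" for u v
  proof (cases "u = v")
    case False
    have sub: "{u..v} \<subseteq> {a..b}" using that by auto
    show ?thesis
      unfolding E_def
    proof (rule oscillatory_integral_monotone_derivative_bound[OF \<open>u \<le> v\<close> _ _ _ \<open>\<delta> > 0\<close>])
      fix x assume x: "x \<in> {u..v}"
      show "(\<phi> has_real_derivative f x) (at x within {u..v})"
        "(f has_real_derivative f' x) (at x within {u..v})"
        using x sub by (meson DERIV_subset d\<phi> df subsetD)+
      show "0 \<le> f' x" using x sub f'_ge[of x] r by auto
    next
      show "continuous_on {u..v} f'" using continuous_on_subset[OF cf' sub] .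
    qed (use False that in auto)
  qed (use \<delta> in simp)
  have iE: "E integrable_on {a..b}"
    unfolding E_def by (intro integrable_continuous_real continuous_intros DERIV_continuous_on[OF d\<phi>])
  have middle: "norm (integral {p..q} E) \<le> q - p"
    using has_integral_bound_real[of 1 "{}" E "integral {p..q} E" p q]
      integrable_on_subinterval[OF iE, of p q] pq by (auto simp: E_def)
  have "norm (integral {a..b} E)
      \<le> norm (integral {a..p} E) + norm (integral {p..q} E) + norm (integral {q..b} E)"
    using norm_integral_split3_le[OF iE pq(1-3)] .
  also have "\<dots> \<le> 4 / \<delta> + 2 / \<delta> + 4 / \<delta>"
  proof -
    have "norm (integral {a..p} E) \<le> 4 / \<delta>" "norm (integral {q..b} E) \<le> 4 / \<delta>"
      using pq left right by (auto intro: outer)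
    with middle pq(4) \<delta>(2) show ?thesis by linarith
  qed
  also have "\<dots> = 10 / \<delta>"
    by (simp add: add_divide_distrib[symmetric])
  finally show ?thesis by (simp add: E_def \<delta>_def)
qed

lemma oscillatory_integral_second_derivative_abs_bound:
  fixes \<phi> f f' :: "real \<Rightarrow> real"
  assumes ab: "a \<le> b" and r: "r > 0"
    and d\<phi>: "\<And>x. x \<in> {a..b} \<Longrightarrow> (\<phi> has_real_derivative f x) (at x within {a..b})"
    and df: "\<And>x. x \<in> {a..b} \<Longrightarrow> (f has_real_derivative f' x) (at x within {a..b})"
    and cf': "continuous_on {a..b} f'"
    and f'_ge: "\<And>x. x \<in> {a..b} \<Longrightarrow> r \<le> \<bar>f' x\<bar>"
  shows "norm (integral {a..b} (\<lambda>x. exp (\<i> * of_real (\<phi> x)))) \<le> 10 / sqrt r"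
proof -
  have "(\<forall>x\<in>{a..b}. r \<le> f' x) \<or> (\<forall>x\<in>{a..b}. r \<le> - f' x)"
  proof (rule ccontr)
    assume "\<not> ?thesis"
    then obtain x y where "x \<in> {a..b}" "y \<in> {a..b}" "f' x < 0" "0 < f' y"
      using f'_ge r by (metis abs_if abs_minus_cancel order_less_le_trans not_le)
    moreover have "connected (f' ` {a..b})"
      using connected_continuous_image[OF cf' connected_Icc] .
    ultimately have "0 \<in> f' ` {a..b}"
      using connected_contains_Icc[of "f' ` {a..b}" "f' x" "f' y"] by fastforce
    with f'_ge r show False by fastforce
  qed
  then show ?thesis
  proof
    assume "\<forall>x\<in>{a..b}. r \<le> f' x"
    then show ?thesis
      using oscillatory_integral_second_derivative_bound[OF ab r d\<phi> df cf'] by blast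
  next
    assume "\<forall>x\<in>{a..b}. r \<le> - f' x"
    then have "norm (integral {a..b} (\<lambda>x. exp (\<i> * of_real (- \<phi> x)))) \<le> 10 / sqrt r"
      using d\<phi> df cf' by (intro oscillatory_integral_second_derivative_bound[OF ab r,
          of _ "\<lambda>x. - f x" "\<lambda>x. - f' x"]) (auto intro: DERIV_minus continuous_intros)
    moreover have "integral {a..b} (\<lambda>x. exp (\<i> * of_real (- \<phi> x)))
        = cnj (integral {a..b} (\<lambda>x. exp (\<i> * of_real (\<phi> x))))"
      by (simp add: integral_cnj exp_cnj)
    ultimately show ?thesis by simp
  qed
qed

section \<open>Oscillatory integrals along curves of positive curvature\<close>

lemma inner_sq_orthogonal_R2:
  fixes u a c :: "real \<times> real"
  assumes "norm a = 1" "inner a c = 0"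
  shows "(inner u c)^2 = (norm c)^2 * ((norm u)^2 - (inner u a)^2)"
proof -
  obtain u1 u2 a1 a2 c1 c2 where "u = (u1, u2)" "a = (a1, a2)" "c = (c1, c2)"
    by (metis prod.exhaust)
  with assms have "a1^2 + a2^2 = 1" "a1 * c1 + a2 * c2 = 0"
    and "?thesis \<longleftrightarrow> (u1 * c1 + u2 * c2)^2 = (c1^2 + c2^2) * ((u1^2 + u2^2) - (u1 * a1 + u2 * a2)^2)"
    by (auto simp: norm_Pair)
  then show ?thesis by algebra
qed

lemma orthogonal_frame_dichotomy_R2:
  fixes u a c :: "real \<times> real"
  assumes "norm a = 1" "inner a c = 0" "k \<le> norm c" "0 \<le> k"
  shows "(norm u)^2 / 2 \<le> (inner u a)^2 \<or> k^2 * (norm u)^2 / 2 \<le> (inner u c)^2"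
proof -
  have "k^2 * (norm u)^2 / 2 \<le> (inner u c)^2" if "\<not> (norm u)^2 / 2 \<le> (inner u a)^2"
  proof -
    from that have "(norm u)^2 / 2 \<le> (norm u)^2 - (inner u a)^2" by simp
    moreover have "k^2 \<le> (norm c)^2" using assms(3,4) by (simp add: power_mono)
    ultimately have "k^2 * ((norm u)^2 / 2) \<le> (norm c)^2 * ((norm u)^2 - (inner u a)^2)"
      by (intro mult_mono) auto
    then show ?thesis
      using inner_sq_orthogonal_R2[OF assms(1,2)] by simp
  qed
  then show ?thesis by blast
qed

lemma smooth_unit_speed_curvedE:
  assumes "smooth_unit_speed_curved g \<kappa>"
  obtains v w where "\<kappa> > 0"
    "\<And>x. x \<in> {0..1} \<Longrightarrow> (g has_vector_derivative v x) (at x within {0..1})"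
    "\<And>x. x \<in> {0..1} \<Longrightarrow> (v has_vector_derivative w x) (at x within {0..1})"
    "continuous_on {0..1} w"
    "\<And>x. x \<in> {0..1} \<Longrightarrow> norm (v x) = 1"
    "\<And>x. x \<in> {0..1} \<Longrightarrow> \<kappa> \<le> norm (w x)"
proof -
  obtain D :: "nat \<Rightarrow> real \<Rightarrow> real \<times> real" where "\<kappa> > 0" "D 0 = g"
    and dD: "\<And>k x. x \<in> {0..1} \<Longrightarrow> (D k has_vector_derivative D (Suc k) x) (at x within {0..1})"
    and "\<And>x. x \<in> {0..1} \<Longrightarrow> norm (D 1 x) = 1" "\<And>x. x \<in> {0..1} \<Longrightarrow> \<kappa> \<le> norm (D 2 x)"
    using assms unfolding smooth_unit_speed_curved_def by blast
  moreover have "continuous_on {0..1} (D 2)"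
    using dD[of _ 2] continuous_on_vector_derivative by blast
  ultimately show ?thesis
    using that[of "D 1" "D 2"] dD[of _ 0] dD[of _ 1] by (simp add: numeral_2_eq_2)
qed

lemma smooth_unit_speed_curved_continuous:
  assumes "smooth_unit_speed_curved g \<kappa>"
  shows "continuous_on {0..1} g"
  using continuous_on_vector_derivative smooth_unit_speed_curvedE[OF assms] by metis

lemma inner_vector_derivative_unit_eq_0:
  fixes v :: "real \<Rightarrow> 'a::real_inner"
  assumes "a < b" "x \<in> {a..b}"
    and dv: "(v has_vector_derivative v') (at x within {a..b})"
    and unit: "\<And>y. y \<in> {a..b} \<Longrightarrow> norm (v y) = 1"
  shows "inner (v x) v' = 0"
proof -
  have "((\<lambda>y. inner (v y) (v y)) has_vector_derivative inner (v x) v' + inner v' (v x))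
      (at x within {a..b})"
    by (rule bounded_bilinear.has_vector_derivative[OF bounded_bilinear_inner dv dv])
  moreover have "((\<lambda>y. inner (v y) (v y)) has_vector_derivative 0) (at x within {a..b})"
  proof (rule has_vector_derivative_transform[OF \<open>x \<in> {a..b}\<close>])
    show "inner (v y) (v y) = 1" if "y \<in> {a..b}" for y
      using unit[OF that] by (simp add: power2_norm_eq_inner[symmetric])
  qed simp
  ultimately have "inner (v x) v' + inner v' (v x) = 0"
    using vector_derivative_unique_within_closed_interval[of a b x] assms(1,2) by auto
  then show ?thesis by (simp add: inner_commute)
qed

lemma abs_ge_of_sq_ge_half:
  fixes x c :: real
  assumes "c^2 / 2 \<le> x^2" "0 \<le> c"
  shows "7/10 * c \<le> \<bar>x\<bar>"
proof -
  have "(7/10 * c)^2 = 49/100 * c^2" by (simp add: power2_eq_square)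
  then have "(7/10 * c)^2 \<le> x^2" using assms(1) zero_le_power2[of c] by linarith
  then show ?thesis using assms(2) by (simp add: abs_le_square_iff[symmetric])
qed

lemma oscillatory_integral_dominant_first_derivative_bound:
  fixes \<phi> f f' :: "real \<Rightarrow> real"
  assumes ab: "a \<le> b" "b - a \<le> 1" and R: "1 \<le> R" and K: "0 \<le> K"
    and d\<phi>: "\<And>x. x \<in> {a..b} \<Longrightarrow> (\<phi> has_real_derivative f x) (at x within {a..b})"
    and df: "\<And>x. x \<in> {a..b} \<Longrightarrow> (f has_real_derivative f' x) (at x within {a..b})"
    and cf': "continuous_on {a..b} f'"
    and f_ge: "\<And>x. x \<in> {a..b} \<Longrightarrow> R / 2 \<le> \<bar>f x\<bar>"
    and f'_le: "\<And>x. x \<in> {a..b} \<Longrightarrow> \<bar>f' x\<bar> \<le> R * K"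
  shows "norm (integral {a..b} (\<lambda>x. exp (\<i> * of_real (\<phi> x)))) \<le> (4 + 4 * K) / sqrt R"
proof -
  have "norm (integral {a..b} (\<lambda>x. exp (\<i> * of_real (\<phi> x))))
      \<le> 2 / (R / 2) + (b - a) * (R * K) / (R / 2)^2"
    using R f_ge f'_le by (intro oscillatory_integral_bounded_derivatives_bound[OF ab(1) d\<phi> df cf']) auto
  also have "\<dots> = 4 / R + 4 * ((b - a) * K) / R"
    using R by (simp add: field_simps power2_eq_square)
  also have "\<dots> \<le> 4 / R + 4 * K / R"
    using ab K R by (intro add_left_mono divide_right_mono mult_left_mono mult_left_le_one_le) auto
  also have "\<dots> = (4 + 4 * K) / R"
    by (simp add: add_divide_distrib)
  also have "\<dots> \<le> (4 + 4 * K) / sqrt R"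
    using R K mult_left_mono[of 1 R R] by (intro divide_left_mono) (auto simp: real_sqrt_le_iff' power2_eq_square)
  finally show ?thesis .
qed

lemma oscillatory_integral_dominant_second_derivative_bound:
  fixes \<phi> f f' :: "real \<Rightarrow> real"
  assumes ab: "a \<le> b" and R: "0 < R" and \<kappa>: "0 < \<kappa>"
    and d\<phi>: "\<And>x. x \<in> {a..b} \<Longrightarrow> (\<phi> has_real_derivative f x) (at x within {a..b})"
    and df: "\<And>x. x \<in> {a..b} \<Longrightarrow> (f has_real_derivative f' x) (at x within {a..b})"
    and cf': "continuous_on {a..b} f'"
    and f'_ge: "\<And>x. x \<in> {a..b} \<Longrightarrow> \<kappa> * R / 2 \<le> \<bar>f' x\<bar>"
  shows "norm (integral {a..b} (\<lambda>x. exp (\<i> * of_real (\<phi> x)))) \<le> 10 * sqrt (2 / \<kappa>) / sqrt R"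
proof -
  have "norm (integral {a..b} (\<lambda>x. exp (\<i> * of_real (\<phi> x)))) \<le> 10 / sqrt (\<kappa> * R / 2)"
    using R \<kappa> f'_ge by (intro oscillatory_integral_second_derivative_abs_bound[OF ab _ d\<phi> df cf']) auto
  also have "\<dots> = 10 * sqrt (2 / \<kappa>) / sqrt R"
    using R \<kappa> by (simp add: real_sqrt_mult real_sqrt_divide field_simps)
  finally show ?thesis .
qed

lemma curve_oscillatory_integral_short_arc_bound:
  fixes g v w :: "real \<Rightarrow> real \<times> real" and \<xi> :: "real \<times> real"
  assumes dg: "\<And>x. x \<in> {a..b} \<Longrightarrow> (g has_vector_derivative v x) (at x within {a..b})"
    and dv: "\<And>x. x \<in> {a..b} \<Longrightarrow> (v has_vector_derivative w x) (at x within {a..b})"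
    and cw: "continuous_on {a..b} w"
    and frame: "norm (v a) = 1" "inner (v a) (w a) = 0" "\<kappa> \<le> norm (w a)" "\<kappa> > 0"
    and w_le: "\<And>x. x \<in> {a..b} \<Longrightarrow> norm (w x) \<le> K"
    and ab: "a \<le> b" "b - a \<le> 1"
    and v_near: "\<And>x. x \<in> {a..b} \<Longrightarrow> norm (v x - v a) \<le> 1/5"
    and w_near: "\<And>x. x \<in> {a..b} \<Longrightarrow> norm (w x - w a) \<le> \<kappa>/5"
    and \<xi>: "1 \<le> norm \<xi>"
  shows "norm (integral {a..b} (\<lambda>x. exp (\<i> * of_real (inner \<xi> (g x)))))
           \<le> (4 + 4 * K + 10 * sqrt (2 / \<kappa>)) / sqrt (norm \<xi>)"
proof -
  define R where "R = norm \<xi>"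
  define f where "f x = inner \<xi> (v x)" for x
  define f' where "f' x = inner \<xi> (w x)" for x
  have R: "1 \<le> R" using \<xi> by (simp add: R_def)
  have "a \<in> {a..b}" using ab by simp
  then have K: "0 \<le> K" using w_le norm_ge_zero order_trans by blast
  have d\<phi>: "((\<lambda>x. inner \<xi> (g x)) has_real_derivative f x) (at x within {a..b})"
    and df: "(f has_real_derivative f' x) (at x within {a..b})" if "x \<in> {a..b}" for x
    unfolding has_real_derivative_iff_has_vector_derivative f_def f'_def
    using that dg dv by (auto intro: bounded_linear.has_vector_derivative[OF bounded_linear_inner_right])
  have cf': "continuous_on {a..b} f'" unfolding f'_def by (intro continuous_intros cw)
  have near: "\<bar>inner \<xi> (u x) - inner \<xi> (u a)\<bar> \<le> R * e"
    if "norm (u x - u a) \<le> e" for u :: "real \<Rightarrow> real \<times> real" and x e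
    using Cauchy_Schwarz_ineq2[of \<xi> "u x - u a"] that R
    by (simp add: R_def inner_diff_right) (meson mult_left_mono norm_ge_zero order_trans)
  consider "R^2 / 2 \<le> (f a)^2" | "(\<kappa> * R)^2 / 2 \<le> (f' a)^2"
    using orthogonal_frame_dichotomy_R2[OF frame(1,2,3), of \<xi>] frame(4)
    by (auto simp: R_def f_def f'_def inner_commute power_mult_distrib)
  then show ?thesis
  proof cases
    case 1
    have f_ge: "R / 2 \<le> \<bar>f x\<bar>" if "x \<in> {a..b}" for x
      using abs_ge_of_sq_ge_half[OF 1] near[OF v_near[OF that]] R unfolding f_def by linarith
    have "\<bar>f' x\<bar> \<le> R * K" if "x \<in> {a..b}" for x
      using Cauchy_Schwarz_ineq2[of \<xi> "w x"] w_le[OF that] R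
      by (simp add: R_def f'_def) (meson mult_left_mono norm_ge_zero order_trans)
    with f_ge have "norm (integral {a..b} (\<lambda>x. exp (\<i> * of_real (inner \<xi> (g x)))))
        \<le> (4 + 4 * K) / sqrt R"
      by (intro oscillatory_integral_dominant_first_derivative_bound[OF ab R(1) K d\<phi> df cf'])
    also have "\<dots> \<le> (4 + 4 * K + 10 * sqrt (2 / \<kappa>)) / sqrt R"
      using R frame(4) by (intro divide_right_mono) auto
    finally show ?thesis by (simp add: R_def)
  next
    case 2
    have "\<kappa> * R / 2 \<le> \<bar>f' x\<bar>" if "x \<in> {a..b}" for x
    proof -
      have "\<bar>f' x - f' a\<bar> \<le> \<kappa> * R / 5"
        using near[OF w_near[OF that]] unfolding f'_def by (simp add: mult.commute)
      then show ?thesis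
        using abs_ge_of_sq_ge_half[OF 2] abs_triangle_ineq2_sym[of "f' a" "f' x"] R frame(4)
        by simp
    qed
    then have "norm (integral {a..b} (\<lambda>x. exp (\<i> * of_real (inner \<xi> (g x)))))
        \<le> 10 * sqrt (2 / \<kappa>) / sqrt R"
      using R frame(4) by (intro oscillatory_integral_dominant_second_derivative_bound[OF ab(1) _ _ d\<phi> df cf']) auto
    also have "\<dots> \<le> (4 + 4 * K + 10 * sqrt (2 / \<kappa>)) / sqrt R"
      using R K by (intro divide_right_mono) auto
    finally show ?thesis by (simp add: R_def)
  qed
qed

lemma norm_integral_le_of_short_pieces:
  fixes E :: "real \<Rightarrow> 'a::banach"
  assumes "E integrable_on {s..t}" "s \<le> t" "t - s \<le> real n * h"
    and "\<And>a b. s \<le> a \<Longrightarrow> a \<le> b \<Longrightarrow> b \<le> t \<Longrightarrow> b - a \<le> h \<Longrightarrow> norm (integral {a..b} E) \<le> B"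
  shows "norm (integral {s..t} E) \<le> real n * B"
  using assms
proof (induction n arbitrary: t)
  case 0
  then show ?case by simp
next
  case (Suc n)
  have "0 \<le> h"
  proof (rule ccontr)
    assume "\<not> 0 \<le> h"
    then have "real (Suc n) * h < 0" by (simp add: mult_pos_neg)
    with Suc.prems(2,3) show False by linarith
  qed
  then have B: "0 \<le> B"
    using Suc.prems(2) Suc.prems(4)[of s s] by simp
  show ?case
  proof (cases "t - s \<le> h")
    case True
    then have "norm (integral {s..t} E) \<le> B" using Suc.prems by auto
    also have "\<dots> \<le> real (Suc n) * B" using B by (simp add: algebra_simps)
    finally show ?thesis .
  next
    case False
    with Suc.prems(3) have "0 < real n * h" by (simp add: algebra_simps)
    then have "0 < h" by (simp add: zero_less_mult_iff)
    define t' where "t' = t - h"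
    have t': "s \<le> t'" "t' \<le> t" "t' - s \<le> real n * h"
      using False Suc.prems(3) \<open>0 < h\<close> by (auto simp: t'_def algebra_simps)
    have "norm (integral {s..t'} E) \<le> real n * B"
      using t' Suc.prems by (intro Suc.IH) (auto intro: integrable_on_subinterval)
    moreover have "norm (integral {t'..t} E) \<le> B"
      using t' Suc.prems by (auto simp: t'_def)
    moreover have "integral {s..t'} E + integral {t'..t} E = integral {s..t} E"
      using t' Suc.prems(1) by (intro Henstock_Kurzweil_Integration.integral_combine) auto
    ultimately show ?thesis
      using norm_triangle_ineq[of "integral {s..t'} E" "integral {t'..t} E"]
      by (simp add: algebra_simps)
  qed
qed

lemma continuous_on_Icc_small_oscillation:
  fixes v :: "real \<Rightarrow> 'a::real_normed_vector"
  assumes "continuous_on {c..d} v" "e > 0"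
  obtains h where "h > 0"
    "\<And>a x. a \<in> {c..d} \<Longrightarrow> x \<in> {c..d} \<Longrightarrow> \<bar>x - a\<bar> \<le> h \<Longrightarrow> norm (v x - v a) \<le> e"
proof -
  have "uniformly_continuous_on {c..d} v"
    using assms(1) by (intro compact_uniformly_continuous) auto
  then obtain h where "h > 0" "\<And>a x. a \<in> {c..d} \<Longrightarrow> x \<in> {c..d} \<Longrightarrow> dist x a < h \<Longrightarrow> dist (v x) (v a) < e"
    unfolding uniformly_continuous_on_def using assms(2) by metis
  then show ?thesis
    using that[of "h / 2"] by (auto simp: dist_norm dist_real_def less_imp_le)
qed

lemma smooth_unit_speed_curved_short_arc_bound:
  assumes "smooth_unit_speed_curved g \<kappa>"
  obtains C h where "C > 0" "h > 0"
    "\<And>\<xi> a b. 1 \<le> norm \<xi> \<Longrightarrow> 0 \<le> a \<Longrightarrow> a \<le> b \<Longrightarrow> b \<le> 1 \<Longrightarrow> b - a \<le> h \<Longrightarrow>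
      norm (integral {a..b} (\<lambda>x. exp (\<i> * of_real (inner \<xi> (g x))))) \<le> C / sqrt (norm \<xi>)"
proof -
  obtain v w where \<kappa>: "\<kappa> > 0"
    and dg: "\<And>x. x \<in> {0..1} \<Longrightarrow> (g has_vector_derivative v x) (at x within {0..1})"
    and dv: "\<And>x. x \<in> {0..1} \<Longrightarrow> (v has_vector_derivative w x) (at x within {0..1})"
    and cw: "continuous_on {0..1} w"
    and unit: "\<And>x. x \<in> {0..1} \<Longrightarrow> norm (v x) = 1"
    and curv: "\<And>x. x \<in> {0..1} \<Longrightarrow> \<kappa> \<le> norm (w x)"
    using smooth_unit_speed_curvedE[OF assms] by metis
  have orth: "inner (v x) (w x) = 0" if "x \<in> {0..1}" for x
    using inner_vector_derivative_unit_eq_0[of 0 1 x v "w x"] that dv unit by simp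
  obtain K where K: "K > 0" "\<And>x. x \<in> {0..1} \<Longrightarrow> norm (w x) \<le> K"
    using compact_imp_bounded[OF compact_continuous_image[OF cw compact_Icc]]
    unfolding bounded_pos by auto
  obtain h1 where h1: "h1 > 0"
    "\<And>a x. a \<in> {0..1} \<Longrightarrow> x \<in> {0..1} \<Longrightarrow> \<bar>x - a\<bar> \<le> h1 \<Longrightarrow> norm (v x - v a) \<le> 1/5"
    using continuous_on_Icc_small_oscillation[OF continuous_on_vector_derivative[OF dv], of "1/5"]
    by auto
  obtain h2 where h2: "h2 > 0"
    "\<And>a x. a \<in> {0..1} \<Longrightarrow> x \<in> {0..1} \<Longrightarrow> \<bar>x - a\<bar> \<le> h2 \<Longrightarrow> norm (w x - w a) \<le> \<kappa>/5"
    using continuous_on_Icc_small_oscillation[OF cw, of "\<kappa>/5"] \<kappa> by auto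
  show ?thesis
  proof (rule that[of "4 + 4 * K + 10 * sqrt (2 / \<kappa>)" "min 1 (min h1 h2)"])
    show "0 < 4 + 4 * K + 10 * sqrt (2 / \<kappa>)" "0 < min 1 (min h1 h2)"
      using K \<kappa> h1 h2 by (auto intro: add_pos_nonneg)
    fix \<xi> :: "real \<times> real" and a b :: real
    assume \<xi>: "1 \<le> norm \<xi>" and ab: "0 \<le> a" "a \<le> b" "b \<le> 1" "b - a \<le> min 1 (min h1 h2)"
    have sub: "{a..b} \<subseteq> {0..1}" using ab by auto
    show "norm (integral {a..b} (\<lambda>x. exp (\<i> * of_real (inner \<xi> (g x)))))
        \<le> (4 + 4 * K + 10 * sqrt (2 / \<kappa>)) / sqrt (norm \<xi>)"
    proof (rule curve_oscillatory_integral_short_arc_bound[OF _ _ _ _ _ _ \<kappa> _ \<open>a \<le> b\<close> _ _ _ \<xi>])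
      show "(g has_vector_derivative v x) (at x within {a..b})"
        "(v has_vector_derivative w x) (at x within {a..b})"
        if "x \<in> {a..b}" for x
        using that sub dg dv by (meson has_vector_derivative_within_subset subsetD)+
      show "norm (w x) \<le> K"
        "norm (v x - v a) \<le> 1/5" "norm (w x - w a) \<le> \<kappa>/5"
        if "x \<in> {a..b}" for x
        using that sub K(2) h1(2)[of a x] h2(2)[of a x] ab by auto
      show "continuous_on {a..b} w" using continuous_on_subset[OF cw sub] .
      show "norm (v a) = 1" "inner (v a) (w a) = 0" "\<kappa> \<le> norm (w a)" "b - a \<le> 1"
        using unit orth curv ab by auto
    qed
  qed
qed

lemma smooth_unit_speed_curved_oscillatory_bound:
  assumes "smooth_unit_speed_curved g \<kappa>"
  obtains C where "C > 0"
    "\<And>\<xi> s t. 1 \<le> norm \<xi> \<Longrightarrow> 0 \<le> s \<Longrightarrow> s \<le> t \<Longrightarrow> t \<le> 1 \<Longrightarrow>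
      norm (integral {s..t} (\<lambda>x. exp (\<i> * of_real (inner \<xi> (g x))))) \<le> C / sqrt (norm \<xi>)"
proof -
  obtain C h where C: "C > 0" and h: "h > 0"
    and short: "\<And>\<xi> a b. 1 \<le> norm \<xi> \<Longrightarrow> 0 \<le> a \<Longrightarrow> a \<le> b \<Longrightarrow> b \<le> 1 \<Longrightarrow> b - a \<le> h \<Longrightarrow>
      norm (integral {a..b} (\<lambda>x. exp (\<i> * of_real (inner \<xi> (g x))))) \<le> C / sqrt (norm \<xi>)"
    using smooth_unit_speed_curved_short_arc_bound[OF assms] by metis
  define n where "n = nat \<lceil>1 / h\<rceil>"
  have "1 / h \<le> real n"
    unfolding n_def by (rule real_nat_ceiling_ge)
  with h have "1 \<le> real n * h"
    by (simp add: pos_divide_le_eq)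
  moreover from this have "0 < real n"
    by (cases "n = 0") auto
  ultimately have n: "1 \<le> real n * h" "0 < real n" .
  have cg: "continuous_on {0..1} g" by (rule smooth_unit_speed_curved_continuous[OF assms])
  show ?thesis
  proof (rule that[of "real n * C"])
    show "0 < real n * C" using n C by simp
    fix \<xi> :: "real \<times> real" and s t :: real
    assume \<xi>: "1 \<le> norm \<xi>" and st: "0 \<le> s" "s \<le> t" "t \<le> 1"
    have "norm (integral {s..t} (\<lambda>x. exp (\<i> * of_real (inner \<xi> (g x))))) \<le> real n * (C / sqrt (norm \<xi>))"
    proof (rule norm_integral_le_of_short_pieces[OF _ \<open>s \<le> t\<close>])
      show "(\<lambda>x. exp (\<i> * of_real (inner \<xi> (g x)))) integrable_on {s..t}"
        using st by (intro integrable_continuous_real continuous_intros continuous_on_subset[OF cg]) auto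
      show "t - s \<le> real n * h" using n st by linarith
    qed (use st short[OF \<xi>] in auto)
    then show "norm (integral {s..t} (\<lambda>x. exp (\<i> * of_real (inner \<xi> (g x))))) \<le> real n * C / sqrt (norm \<xi>)"
      by simp
  qed
qed

section \<open>Eigenfunctions with lattice frequencies\<close>

definition lat_freq :: "int \<times> int \<Rightarrow> int \<times> int \<Rightarrow> real \<times> real" where
  "lat_freq mu nu = (2 * pi * real_of_int (fst mu - fst nu), 2 * pi * real_of_int (snd mu - snd nu))"

lemma norm_lat_freq: "norm (lat_freq mu nu) = 2 * pi * lat_dist mu nu"
proof -
  have "norm (lat_freq mu nu)
      = sqrt ((2 * pi)^2 * (real_of_int (fst mu - fst nu)^2 + real_of_int (snd mu - snd nu)^2))"
    unfolding lat_freq_def norm_Pair by (simp add: power2_eq_square algebra_simps)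
  then show ?thesis
    by (simp add: lat_dist_def real_sqrt_mult)
qed

lemma lat_dist_ge_1:
  assumes "mu \<noteq> nu"
  shows "1 \<le> lat_dist mu nu"
proof -
  have "(fst mu - fst nu)^2 + (snd mu - snd nu)^2 \<noteq> (0::int)"
    using assms by (auto simp: prod_eq_iff power2_eq_square add_nonneg_eq_0_iff)
  moreover have "0 \<le> (fst mu - fst nu)^2 + (snd mu - snd nu)^2"
    by simp
  ultimately have "1 \<le> (fst mu - fst nu)^2 + (snd mu - snd nu)^2"
    by linarith
  then have "(1::real) \<le> of_int ((fst mu - fst nu)^2 + (snd mu - snd nu)^2)"
    by (metis of_int_1 of_int_le_iff)
  then show ?thesis
    unfolding lat_dist_def by (rule real_sqrt_ge_one)
qed

lemma abs_le_square_int: "\<bar>x\<bar> \<le> x^2" for x :: int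
proof (cases "x = 0")
  case False
  then have "\<bar>x\<bar> * 1 \<le> \<bar>x\<bar> * \<bar>x\<bar>" by (intro mult_left_mono) auto
  then show ?thesis by (simp add: power2_eq_square abs_mult_self_eq)
qed simp

lemma finite_Elam: "finite (Elam m)"
proof (rule finite_subset)
  show "Elam m \<subseteq> {- int m..int m} \<times> {- int m..int m}"
  proof safe
    fix x y :: int
    assume "(x, y) \<in> Elam m"
    then have "x^2 + y^2 = int m"
      by (simp add: Elam_def lat_normsq_def)
    then have "x^2 \<le> int m" "y^2 \<le> int m"
      using zero_le_power2[of x] zero_le_power2[of y] by linarith+
    then show "x \<in> {- int m..int m}" "y \<in> {- int m..int m}"
      using abs_le_square_int[of x] abs_le_square_int[of y] by auto
  qed
qed simp

lemma exp_lat_inner_mult_cnj: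
  "exp (2 * of_real pi * \<i> * of_real (lat_inner mu y)) * cnj (exp (2 * of_real pi * \<i> * of_real (lat_inner nu y)))
     = exp (\<i> * of_real (inner (lat_freq mu nu) y))"
proof -
  have freq: "inner (lat_freq mu nu) y = 2 * pi * (lat_inner mu y - lat_inner nu y)"
    by (simp add: lat_freq_def lat_inner_def inner_prod_def algebra_simps)
  have "2 * of_real pi * \<i> * of_real (lat_inner mu y) + - (2 * of_real pi * \<i> * of_real (lat_inner nu y))
      = \<i> * of_real (inner (lat_freq mu nu) y)"
    unfolding freq by (simp add: algebra_simps)
  moreover have "cnj (exp (2 * of_real pi * \<i> * of_real (lat_inner nu y)))
      = exp (- (2 * of_real pi * \<i> * of_real (lat_inner nu y)))"
    by (simp add: exp_cnj)
  ultimately show ?thesis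
    by (simp flip: exp_add)
qed

lemma cmod_Phi_sq:
  "(cmod (Phi m a y))^2
     = (\<Sum>mu\<in>Elam m. \<Sum>nu\<in>Elam m. Re (a mu * cnj (a nu) * exp (\<i> * of_real (inner (lat_freq mu nu) y))))"
proof -
  define w where "w mu = exp (2 * of_real pi * \<i> * of_real (lat_inner mu y))" for mu
  have "complex_of_real ((cmod (Phi m a y))^2) = Phi m a y * cnj (Phi m a y)"
    by (rule complex_norm_square)
  also have "\<dots> = (\<Sum>mu\<in>Elam m. \<Sum>nu\<in>Elam m. a mu * cnj (a nu) * (w mu * cnj (w nu)))"
    by (simp add: Phi_def w_def sum_product mult_ac)
  also have "\<dots> = (\<Sum>mu\<in>Elam m. \<Sum>nu\<in>Elam m. a mu * cnj (a nu) * exp (\<i> * of_real (inner (lat_freq mu nu) y)))"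
    by (simp add: w_def exp_lat_inner_mult_cnj)
  finally have "(cmod (Phi m a y))^2
      = Re (\<Sum>mu\<in>Elam m. \<Sum>nu\<in>Elam m. a mu * cnj (a nu) * exp (\<i> * of_real (inner (lat_freq mu nu) y)))"
    by (metis Re_complex_of_real)
  then show ?thesis
    by (simp only: Re_sum)
qed

lemma integral_cmod_Phi_sq:
  fixes g :: "real \<Rightarrow> real \<times> real"
  assumes "continuous_on {s..t} g"
  shows "integral {s..t} (\<lambda>x. (cmod (Phi m a (g x)))^2)
    = (\<Sum>mu\<in>Elam m. \<Sum>nu\<in>Elam m. Re (a mu * cnj (a nu) *
         integral {s..t} (\<lambda>x. exp (\<i> * of_real (inner (lat_freq mu nu) (g x))))))"
proof -
  have "((\<lambda>x. Re (a mu * cnj (a nu) * exp (\<i> * of_real (inner (lat_freq mu nu) (g x)))))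
      has_integral Re (a mu * cnj (a nu) *
        integral {s..t} (\<lambda>x. exp (\<i> * of_real (inner (lat_freq mu nu) (g x)))))) {s..t}" for mu nu
    by (intro has_integral_Re has_integral_mult_right integrable_integral integrable_continuous_real
        continuous_intros assms)
  then show ?thesis
    unfolding cmod_Phi_sq by (intro integral_unique has_integral_sum finite_Elam)
qed

lemma integral_cmod_Phi_sq_ge:
  fixes g :: "real \<Rightarrow> real \<times> real"
  assumes cg: "continuous_on {s..t} g" and st: "s \<le> t"
    and norm_a: "(\<Sum>mu\<in>Elam m. (cmod (a mu))^2) = 1"
    and B: "0 \<le> B"
    and off_diag: "\<And>mu nu. mu \<in> Elam m \<Longrightarrow> nu \<in> Elam m \<Longrightarrow> mu \<noteq> nu \<Longrightarrow>
        norm (integral {s..t} (\<lambda>x. exp (\<i> * of_real (inner (lat_freq mu nu) (g x))))) \<le> B"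
  shows "t - s - B * real (card (Elam m)) \<le> integral {s..t} (\<lambda>x. (cmod (Phi m a (g x)))^2)"
proof -
  define E where "E = Elam m"
  define I where "I mu nu = integral {s..t} (\<lambda>x. exp (\<i> * of_real (inner (lat_freq mu nu) (g x))))"
    for mu nu
  have integral_eq: "integral {s..t} (\<lambda>x. (cmod (Phi m a (g x)))^2)
      = (\<Sum>mu\<in>E. \<Sum>nu\<in>E. Re (a mu * cnj (a nu) * I mu nu))"
    unfolding E_def I_def by (rule integral_cmod_Phi_sq[OF cg])
  have term_ge: "(if mu = nu then (cmod (a mu))^2 * (t - s) else 0) - cmod (a mu) * cmod (a nu) * B
      \<le> Re (a mu * cnj (a nu) * I mu nu)" if "mu \<in> E" "nu \<in> E" for mu nu
  proof (cases "mu = nu")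
    case True
    have "lat_freq mu mu = 0"
      by (simp add: lat_freq_def zero_prod_def)
    then have "I mu mu = of_real (t - s)"
      using st by (simp add: I_def scaleR_conv_of_real)
    moreover have "a mu * cnj (a mu) = of_real ((cmod (a mu))^2)"
      by (rule complex_norm_square[symmetric])
    ultimately show ?thesis
      using True B by simp
  next
    case False
    have "- Re (a mu * cnj (a nu) * I mu nu) \<le> cmod (a mu) * cmod (a nu) * norm (I mu nu)"
      using abs_Re_le_cmod[of "a mu * cnj (a nu) * I mu nu"] by (simp add: norm_mult)
    also have "\<dots> \<le> cmod (a mu) * cmod (a nu) * B"
      using off_diag[OF that[unfolded E_def] False] by (simp add: I_def mult_left_mono)
    finally show ?thesis
      using False by simp
  qed
  have "t - s - B * real (card E) \<le> t - s - B * (\<Sum>mu\<in>E. cmod (a mu))^2"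
    using sum_squared_le_sum_of_squares[of "\<lambda>mu. cmod (a mu)" E] norm_a B
    by (simp add: E_def mult_left_mono)
  also have "\<dots> = (\<Sum>mu\<in>E. \<Sum>nu\<in>E.
      (if mu = nu then (cmod (a mu))^2 * (t - s) else 0) - cmod (a mu) * cmod (a nu) * B)"
    using norm_a finite_Elam[of m]
    by (simp add: E_def sum_subtractf sum.delta sum_distrib_left sum_distrib_right
        power2_eq_square sum_product mult_ac) (simp flip: sum_distrib_left)
  also have "\<dots> \<le> integral {s..t} (\<lambda>x. (cmod (Phi m a (g x)))^2)"
    unfolding integral_eq by (intro sum_mono term_ge)
  finally show ?thesis
    by (simp add: E_def)
qed

lemma oscillatory_integral_lat_freq_bound:
  fixes g :: "real \<Rightarrow> real \<times> real"
  assumes osc: "\<And>\<xi>. 1 \<le> norm \<xi> \<Longrightarrow>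
      norm (integral {s..t} (\<lambda>x. exp (\<i> * of_real (inner \<xi> (g x))))) \<le> C / sqrt (norm \<xi>)"
    and "0 \<le> C" "0 < d" "d \<le> lat_dist mu nu" "mu \<noteq> nu"
  shows "norm (integral {s..t} (\<lambda>x. exp (\<i> * of_real (inner (lat_freq mu nu) (g x)))))
           \<le> C / sqrt (2 * pi * d)"
proof -
  have "1 * 1 \<le> 2 * pi * lat_dist mu nu"
    using lat_dist_ge_1[OF \<open>mu \<noteq> nu\<close>] pi_gt3 by (intro mult_mono) auto
  then have "1 \<le> norm (lat_freq mu nu)"
    by (simp add: norm_lat_freq)
  then have "norm (integral {s..t} (\<lambda>x. exp (\<i> * of_real (inner (lat_freq mu nu) (g x)))))
      \<le> C / sqrt (norm (lat_freq mu nu))"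
    by (rule osc)
  also have "\<dots> \<le> C / sqrt (2 * pi * d)"
    using assms(2-4) by (intro divide_left_mono) (auto simp: norm_lat_freq)
  finally show ?thesis .
qed

lemma eventually_lam_large: "eventually (\<lambda>m. 0 < lam m \<and> T \<le> ln (lam m)) sequentially"
proof -
  have lim_lam: "filterlim lam at_top sequentially"
    unfolding lam_def
    by (rule filterlim_tendsto_pos_mult_at_top[OF tendsto_const _
          filterlim_compose[OF sqrt_at_top filterlim_real_sequentially]]) simp
  have "eventually (\<lambda>m. 0 < lam m) sequentially"
    using lim_lam by (simp add: filterlim_at_top_dense)
  moreover have "eventually (\<lambda>m. T \<le> ln (lam m)) sequentially"
    using filterlim_compose[OF ln_at_top lim_lam] by (simp add: filterlim_at_top)
  ultimately show ?thesis
    by (rule eventually_conj)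
qed

lemma separated_oscillation_le_half_window:
  fixes C c \<epsilon> l :: real
  assumes C: "C > 0" and c: "c > 0" and \<epsilon>: "\<epsilon> > 0" and l: "l > 0" and L: "1 \<le> ln l"
    and large: "(2 * C / sqrt (2 * pi * c)) powr (2 / \<epsilon>) \<le> ln l"
  shows "C / sqrt (2 * pi * (c * l / ln l powr (3/2 + \<epsilon>)))
           \<le> 1/2 * (l powr (-1/2) * ln l powr (3/4 + \<epsilon>))"
proof -
  define L where "L = ln l"
  define K where "K = C / sqrt (2 * pi * c)"
  have K: "K > 0" using C c by (simp add: K_def)
  have "2 * K = ((2 * K) powr (2 / \<epsilon>)) powr (\<epsilon> / 2)"
    using \<epsilon> K by (simp add: powr_powr)
  also have "\<dots> \<le> L powr (\<epsilon> / 2)"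
    using large \<epsilon> K by (intro powr_mono2) (auto simp: K_def L_def)
  finally have KL: "K \<le> 1/2 * L powr (\<epsilon> / 2)" by simp
  have "C / sqrt (2 * pi * (c * l / L powr (3/2 + \<epsilon>))) = K * sqrt (L powr (3/2 + \<epsilon>)) / sqrt l"
    using c l L by (simp add: K_def L_def real_sqrt_mult real_sqrt_divide field_simps)
  also have "sqrt (L powr (3/2 + \<epsilon>)) = L powr (3/4 + \<epsilon>/2)"
    using powr_half_sqrt_powr[of L "3/2 + \<epsilon>"] L by (simp add: L_def add_divide_distrib)
  also have "K * L powr (3/4 + \<epsilon>/2) / sqrt l \<le> 1/2 * L powr (\<epsilon> / 2) * L powr (3/4 + \<epsilon>/2) / sqrt l"
    using KL l by (intro divide_right_mono mult_right_mono) auto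
  also have "\<dots> = 1/2 * (l powr (-1/2) * L powr (3/4 + \<epsilon>))"
    using l by (simp add: powr_minus_divide powr_half_sqrt powr_add[symmetric] add.commute)
  finally show ?thesis by (simp add: L_def)
qed

lemma mean_cmod_Phi_sq_ge_half:
  fixes g :: "real \<Rightarrow> real \<times> real"
  assumes osc: "\<And>\<xi> s t. 1 \<le> norm \<xi> \<Longrightarrow> 0 \<le> s \<Longrightarrow> s \<le> t \<Longrightarrow> t \<le> 1 \<Longrightarrow>
      norm (integral {s..t} (\<lambda>x. exp (\<i> * of_real (inner \<xi> (g x))))) \<le> C / sqrt (norm \<xi>)"
    and cg: "continuous_on {0..1} g" and C: "C > 0" and c: "c > 0" and eps: "eps > 0"
    and lam: "0 < lam m" "1 \<le> ln (lam m)" "(2 * C / sqrt (2 * pi * c)) powr (2 / eps) \<le> ln (lam m)"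
    and sep: "\<And>mu nu. mu \<in> Elam m \<Longrightarrow> nu \<in> Elam m \<Longrightarrow> mu \<noteq> nu \<Longrightarrow>
      c * lam m / ln (lam m) powr (3/2 + eps) \<le> lat_dist mu nu"
    and norm_a: "(\<Sum>mu\<in>Elam m. (cmod (a mu))^2) = 1"
    and st: "0 \<le> s" "s < t" "t \<le> 1"
    and window: "lam m powr (-1/2) * ln (lam m) powr (3/4 + eps) * real (card (Elam m)) < t - s"
  shows "1/2 \<le> integral {s..t} (\<lambda>x. (cmod (Phi m a (g x)))^2) / (t - s)"
proof -
  define d where "d = c * lam m / ln (lam m) powr (3/2 + eps)"
  have "0 < d"
    unfolding d_def using lam c by (intro divide_pos_pos mult_pos_pos) auto
  have lower: "t - s - C / sqrt (2 * pi * d) * real (card (Elam m))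
      \<le> integral {s..t} (\<lambda>x. (cmod (Phi m a (g x)))^2)"
  proof (rule integral_cmod_Phi_sq_ge[OF _ _ norm_a])
    show "continuous_on {s..t} g"
      using st by (intro continuous_on_subset[OF cg]) auto
    show "0 \<le> C / sqrt (2 * pi * d)"
      using C \<open>0 < d\<close> by simp
    fix mu nu assume "mu \<in> Elam m" "nu \<in> Elam m" "mu \<noteq> nu"
    with sep show "norm (integral {s..t} (\<lambda>x. exp (\<i> * of_real (inner (lat_freq mu nu) (g x)))))
        \<le> C / sqrt (2 * pi * d)"
      using st C \<open>0 < d\<close> by (intro oscillatory_integral_lat_freq_bound osc) (auto simp: d_def)
  qed (use st in simp)
  have "C / sqrt (2 * pi * d) \<le> 1/2 * (lam m powr (-1/2) * ln (lam m) powr (3/4 + eps))"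
    unfolding d_def by (rule separated_oscillation_le_half_window[OF C c eps lam])
  then have "C / sqrt (2 * pi * d) * real (card (Elam m))
      \<le> 1/2 * (lam m powr (-1/2) * ln (lam m) powr (3/4 + eps)) * real (card (Elam m))"
    by (rule mult_right_mono) simp_all
  also have "\<dots> < 1/2 * (t - s)"
    using window by simp
  finally show ?thesis
    using lower st by (simp add: pos_le_divide_eq)
qed

theorem lemma5p4:
  fixes g :: "real \<Rightarrow> real \<times> real" and kappa eps c :: real
  assumes "smooth_unit_speed_curved g kappa"
    and "eps > 0" and "c > 0"
  shows "\<exists>M. \<forall>m::nat. \<forall>a :: int \<times> int \<Rightarrow> complex. \<forall>s t :: real.
     m \<ge> M \<longrightarrow>
     (\<forall>mu\<in>Elam m. \<forall>nu\<in>Elam m. mu \<noteq> nu \<longrightarrow>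
         lat_dist mu nu \<ge> c * lam m / ln (lam m) powr (3/2 + eps)) \<longrightarrow>
     (\<Sum>mu\<in>Elam m. (cmod (a mu))^2) = 1 \<longrightarrow>
     0 \<le> s \<longrightarrow> s < t \<longrightarrow> t \<le> 1 \<longrightarrow>
     t - s > lam m powr (-1/2) * ln (lam m) powr (3/4 + eps) * real (card (Elam m)) \<longrightarrow>
     integral {s..t} (\<lambda>x. (cmod (Phi m a (g x)))^2) / (t - s) \<ge> 1/2"
proof -
  obtain C where C: "C > 0" and osc: "\<And>\<xi> s t. 1 \<le> norm \<xi> \<Longrightarrow> 0 \<le> s \<Longrightarrow> s \<le> t \<Longrightarrow> t \<le> 1 \<Longrightarrow>
      norm (integral {s..t} (\<lambda>x. exp (\<i> * of_real (inner \<xi> (g x))))) \<le> C / sqrt (norm \<xi>)"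
    using smooth_unit_speed_curved_oscillatory_bound[OF assms(1)] by metis
  obtain M where M: "\<And>m. M \<le> m \<Longrightarrow>
      0 < lam m \<and> max 1 ((2 * C / sqrt (2 * pi * c)) powr (2 / eps)) \<le> ln (lam m)"
    using eventually_lam_large unfolding eventually_sequentially by blast
  show ?thesis
    using M by (intro exI[of _ M] allI impI mean_cmod_Phi_sq_ge_half[OF osc
        smooth_unit_speed_curved_continuous[OF assms(1)] C assms(3,2)]) auto
qed

end
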